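(* Let $b$ be a nonzero integer and let $A,B,C$ be integers with $\gcd(A,2B,C)=1$ such that the binary quadratic form $Ax^2+2Bxy+Cy^2$ has discriminant $(2B)^2-4AC=-8b^2$. Then for every positive divisor $d$ of $2b^2$ and every $W>0$, $$\#\{(m,n)\in\mathbb{Z}^2:\ |m|,|n|\le W,\ Am^2-2Bmn+Cn^2\equiv0\pmod d\}\ll W^2d^{-1/2}+W,$$ with an absolute implied constant. *)

theory Defs
  imports Complex_Main
begin

end

theory Submission
  imports Defs
begin

text \<open>
  Write \<open>Q(m,n) = A m\<^sup>2 - 2B mn + C n\<^sup>2\<close>; the discriminant condition says \<open>AC - B\<^sup>2 = 2b\<^sup>2\<close>,
  which \<open>d\<close> divides. From \<open>A Q = (Am - Bn)\<^sup>2 + (AC - B\<^sup>2) n\<^sup>2\<close> and the symmetric identity for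
  \<open>C Q\<close>, every zero of \<open>Q\<close> modulo \<open>d\<close> satisfies \<open>d | (Am - Bn)\<^sup>2\<close> and \<open>d | (Cn - Bm)\<^sup>2\<close>,
  hence \<open>N | Am - Bn\<close> and \<open>N | Cn - Bm\<close>, where \<open>N \<ge> \<surd>d\<close> is the least positive integer with
  \<open>d | N\<^sup>2\<close>. With \<open>e = gcd(A,B,N)\<close>, primitivity of the form forces \<open>e | n\<close>, and for fixed
  \<open>n\<close> the first coordinate is determined modulo \<open>N/e\<close>. Counting \<open>n\<close> and then \<open>m\<close> in the box
  gives at most \<open>(2W/e + 1)(2eW/N + 1) \<le> 4W\<^sup>2/N + 4W + 1\<close> points.
\<close>

lemma finite_int_abs_le: "finite {x::int. \<bar>real_of_int x\<bar> \<le> W}"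
proof (rule finite_subset)
  show "{x::int. \<bar>real_of_int x\<bar> \<le> W} \<subseteq> {-\<lceil>W\<rceil>..\<lceil>W\<rceil>}"
    by auto linarith+
qed simp

lemma card_congruent_ints_le:
  fixes X :: "int set" and W :: real and k :: int
  assumes X: "X \<subseteq> {x. \<bar>real_of_int x\<bar> \<le> W}" and "k > 0" "W \<ge> 0"
    and cong: "\<And>x y. x \<in> X \<Longrightarrow> y \<in> X \<Longrightarrow> k dvd x - y"
  shows "real (card X) \<le> 2 * W / k + 1"
proof (cases "X = {}")
  case True
  then show ?thesis using assms by simp
next
  case False
  have fin: "finite X" using X finite_int_abs_le by (rule finite_subset)
  define x0 where "x0 = Min X"
  have x0X: "x0 \<in> X" and x0_le: "\<And>x. x \<in> X \<Longrightarrow> x0 \<le> x"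
    using fin False by (simp_all add: x0_def)
  define f where "f x = (x - x0) div k" for x
  have f_eq: "x - x0 = k * f x" if "x \<in> X" for x
    using cong[OF that x0X] by (simp add: f_def)
  define F where "F = \<lfloor>2 * W / k\<rfloor>"
  have "inj_on f X"
    by (rule inj_onI) (metis f_eq add.commute diff_add_cancel)
  moreover have "f ` X \<subseteq> {0..F}"
  proof
    fix z assume "z \<in> f ` X"
    then obtain x where x: "x \<in> X" and z: "z = f x" by auto
    have "real_of_int k * real_of_int z = real_of_int (x - x0)"
      using f_eq[OF x] z by simp
    also have "\<dots> \<le> 2 * W" using subsetD[OF X x] subsetD[OF X x0X] by auto
    finally have "z \<le> F"
      unfolding F_def using \<open>k > 0\<close> by (simp add: le_floor_iff field_simps mult.commute)
    moreover have "0 \<le> k * z"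
      using f_eq[OF x] x0_le[OF x] z by simp
    then have "0 \<le> z"
      using \<open>k > 0\<close> by (simp add: zero_le_mult_iff)
    ultimately show "z \<in> {0..F}" by simp
  qed
  ultimately have "card X \<le> card {0..F}"
    by (metis card_image card_mono finite_atLeastAtMost_int)
  moreover have "F \<ge> 0" unfolding F_def using assms by simp
  ultimately have "real (card X) \<le> real_of_int F + 1" by simp
  then show ?thesis unfolding F_def by linarith
qed

lemma card_congruent_pairs_le:
  fixes T :: "(int \<times> int) set" and W :: real and k l :: int
  assumes T: "T \<subseteq> {(m, n). \<bar>real_of_int m\<bar> \<le> W \<and> \<bar>real_of_int n\<bar> \<le> W}"
    and "k > 0" "l > 0" "W \<ge> 0"
    and cong_snd: "\<And>m n m' n'. (m, n) \<in> T \<Longrightarrow> (m', n') \<in> T \<Longrightarrow> l dvd n - n'"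
    and cong_fst: "\<And>m m' n. (m, n) \<in> T \<Longrightarrow> (m', n) \<in> T \<Longrightarrow> k dvd m - m'"
  shows "real (card T) \<le> (2 * W / l + 1) * (2 * W / k + 1)"
proof -
  define P where "P = snd ` T"
  define F where "F n = {m. (m, n) \<in> T}" for n
  have card_P: "real (card P) \<le> 2 * W / l + 1"
    using assms unfolding P_def by (intro card_congruent_ints_le) (fastforce+)
  have card_F: "real (card (F n)) \<le> 2 * W / k + 1" for n
    using assms unfolding F_def by (intro card_congruent_ints_le) (fastforce+)
  have fin_P: "finite P"
    by (rule finite_subset[OF _ finite_int_abs_le[of W]]) (use T in \<open>auto simp: P_def\<close>)
  have fin_F: "finite (F n)" for n
    by (rule finite_subset[OF _ finite_int_abs_le[of W]]) (use T in \<open>auto simp: F_def\<close>)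
  have "T = (\<Union>n\<in>P. (\<lambda>m. (m, n)) ` F n)"
    unfolding P_def F_def by force
  then have "card T \<le> (\<Sum>n\<in>P. card ((\<lambda>m. (m, n)) ` F n))"
    using card_UN_le[OF fin_P] by metis
  also have "\<dots> \<le> (\<Sum>n\<in>P. card (F n))"
    by (intro sum_mono card_image_le fin_F)
  finally have "real (card T) \<le> (\<Sum>n\<in>P. real (card (F n)))"
    by (metis of_nat_le_iff of_nat_sum)
  also have "\<dots> \<le> (\<Sum>n\<in>P. 2 * W / k + 1)"
    by (intro sum_mono card_F)
  also have "\<dots> \<le> (2 * W / l + 1) * (2 * W / k + 1)"
    using card_P \<open>k > 0\<close> \<open>W \<ge> 0\<close> by (simp add: mult_right_mono)
  finally show ?thesis .
qed

lemma obtain_dvd_square_iff_dvd: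
  fixes d :: int
  assumes "d > 0"
  obtains N :: int where "N > 0" "\<And>z. d dvd z^2 \<longleftrightarrow> N dvd z"
proof -
  define n where "n = (LEAST k::nat. k > 0 \<and> d dvd (int k)^2)"
  have "\<exists>k::nat. k > 0 \<and> d dvd (int k)^2"
    by (rule exI[of _ "nat d"]) (use assms in simp)
  then have n: "n > 0" "d dvd (int n)^2"
    unfolding n_def by (metis (mono_tags, lifting) LeastI_ex)+
  have n_least: "n \<le> k" if "k > 0" "d dvd (int k)^2" for k
    unfolding n_def using that by (simp add: Least_le)
  have "d dvd z^2 \<longleftrightarrow> int n dvd z" for z
  proof
    assume z: "d dvd z^2"
    define g where "g = gcd z (int n)"
    have "g > 0" using n by (simp add: g_def)
    have "g^2 = gcd (z^2) ((int n)^2)" by (simp add: g_def gcd_exp)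
    then have "d dvd g^2" using z n by (metis gcd_greatest)
    then have "n \<le> nat g" using n_least[of "nat g"] \<open>g > 0\<close> by simp
    moreover have "g \<le> int n" using n by (simp add: g_def zdvd_imp_le)
    ultimately have "g = int n" using \<open>g > 0\<close> by linarith
    then show "int n dvd z" by (metis g_def gcd_dvd1)
  next
    assume "int n dvd z"
    then have "(int n)^2 dvd z^2" by simp
    then show "d dvd z^2" using n(2) by (rule dvd_trans[rotated])
  qed
  then show ?thesis using that[of "int n"] n by simp
qed

lemma dvd_form_imp_dvd_squares:
  fixes A B C d m n :: "'a::comm_ring_1"
  assumes disc: "d dvd A * C - B^2" and Q: "d dvd A * m^2 - 2 * B * m * n + C * n^2"
  shows "d dvd (A * m - B * n)^2" and "d dvd (C * n - B * m)^2"
proof -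
  have "(A * m - B * n)^2 = A * (A * m^2 - 2 * B * m * n + C * n^2) - (A * C - B^2) * n^2"
    and "(C * n - B * m)^2 = C * (A * m^2 - 2 * B * m * n + C * n^2) - (A * C - B^2) * m^2"
    by (simp_all add: power2_eq_square algebra_simps)
  then show "d dvd (A * m - B * n)^2" and "d dvd (C * n - B * m)^2"
    using disc Q by simp_all
qed

lemma gcd_coeffs_modulus_dvd:
  fixes A B C N m n :: int
  assumes "gcd (gcd A B) C = 1" and "N dvd C * n - B * m"
  shows "gcd (gcd A B) N dvd n"
proof -
  let ?e = "gcd (gcd A B) N"
  have "?e dvd C * n - B * m" using assms(2) by (meson dvd_trans gcd_dvd2)
  moreover have "?e dvd B * m" by (meson dvd_mult2 dvd_trans gcd_dvd1 gcd_dvd2)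
  ultimately have "?e dvd C * n" by (metis dvd_add diff_add_cancel)
  moreover have "coprime ?e C"
    using assms(1) by (metis coprime_iff_gcd_eq_1 gcd.assoc gcd.commute gcd_dvd1
        coprime_imp_coprime dvd_trans)
  ultimately show ?thesis by (simp add: coprime_dvd_mult_right_iff)
qed

lemma modulus_div_gcd_coeffs_dvd:
  fixes A B N x :: int
  assumes "N \<noteq> 0" and "N dvd A * x" and "N dvd B * x"
  shows "N div gcd (gcd A B) N dvd x"
proof -
  let ?e = "gcd (gcd A B) N"
  have "N dvd gcd (A * x) (B * x)" using assms by simp
  then have "N dvd gcd A B * \<bar>x\<bar>" by (simp add: gcd_mult_right abs_mult gcd.commute)
  then have "N dvd gcd (gcd A B * \<bar>x\<bar>) (N * \<bar>x\<bar>)" by simp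
  then have "?e * (N div ?e) dvd ?e * \<bar>x\<bar>"
    by (simp add: gcd_mult_right abs_mult gcd.commute)
  moreover have "?e \<noteq> 0" using \<open>N \<noteq> 0\<close> by simp
  ultimately show ?thesis by (metis dvd_mult_cancel_left dvd_abs_iff)
qed

lemma card_form_zeros_le:
  fixes A B C d N :: int and W :: real
  defines "e \<equiv> gcd (gcd A B) N"
  assumes prim: "gcd (gcd A B) C = 1" and disc: "d dvd A * C - B^2"
    and "N > 0" and N: "\<And>z. d dvd z^2 \<Longrightarrow> N dvd z" and "W \<ge> 0"
  shows "real (card {(m, n). \<bar>real_of_int m\<bar> \<le> W \<and> \<bar>real_of_int n\<bar> \<le> W \<and>
                  d dvd (A * m^2 - 2 * B * m * n + C * n^2)})
         \<le> (2 * W / e + 1) * (2 * W / (N div e) + 1)"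
proof (rule card_congruent_pairs_le)
  let ?S = "{(m, n). \<bar>real_of_int m\<bar> \<le> W \<and> \<bar>real_of_int n\<bar> \<le> W \<and>
                  d dvd (A * m^2 - 2 * B * m * n + C * n^2)}"
  have lin: "N dvd A * m - B * n" "N dvd C * n - B * m" if "(m, n) \<in> ?S" for m n
    using that N dvd_form_imp_dvd_squares[OF disc] by auto
  have "e > 0" and "e dvd N" using \<open>N > 0\<close> by (simp_all add: e_def)
  then show "e > 0" and "N div e > 0" using \<open>N > 0\<close> by (auto simp: pos_imp_zdiv_pos_iff zdvd_imp_le)
  show "e dvd n - n'" if "(m, n) \<in> ?S" "(m', n') \<in> ?S" for m n m' n'
    using gcd_coeffs_modulus_dvd[OF prim lin(2)] that unfolding e_def by (meson dvd_diff)
  show "N div e dvd m - m'" if "(m, n) \<in> ?S" "(m', n) \<in> ?S" for m m' n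
  proof -
    have "N dvd (A * m - B * n) - (A * m' - B * n)" "N dvd (C * n - B * m') - (C * n - B * m)"
      using lin that by (meson dvd_diff)+
    then have "N dvd A * (m - m')" "N dvd B * (m - m')" by (simp_all add: algebra_simps)
    then show ?thesis unfolding e_def using \<open>N > 0\<close> by (intro modulus_div_gcd_coeffs_dvd) auto
  qed
qed (use \<open>W \<ge> 0\<close> in auto)

lemma two_div_add_one_mult_le:
  fixes e M s W :: real
  assumes "e \<ge> 1" "M \<ge> 1" "0 < s" "s \<le> e * M" "W \<ge> 1"
  shows "(2 * W / e + 1) * (2 * W / M + 1) \<le> 5 * (W^2 / s + W)"
proof -
  have "(2 * W / e + 1) * (2 * W / M + 1) = 4 * W^2 / (e * M) + 2 * W / e + 2 * W / M + 1"
    using assms by (simp add: field_simps power2_eq_square)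
  also have "\<dots> \<le> 4 * W^2 / s + 2 * W + 2 * W + W"
    using assms by (intro add_mono divide_left_mono) (auto simp: divide_le_eq)
  also have "\<dots> \<le> 5 * (W^2 / s + W)"
    using assms by (simp add: field_simps)
  finally show ?thesis .
qed

theorem lemma3p16:
  shows "\<exists>K::real. K > 0 \<and>
    (\<forall>(b::int) (A::int) (B::int) (C::int) (d::int) (W::real).
       b \<noteq> 0 \<longrightarrow> gcd (gcd A (2 * B)) C = 1 \<longrightarrow>
       (2 * B)^2 - 4 * A * C = - 8 * b^2 \<longrightarrow>
       d > 0 \<longrightarrow> d dvd 2 * b^2 \<longrightarrow> W \<ge> 1 \<longrightarrow>
       real (card {(m::int, n::int). \<bar>real_of_int m\<bar> \<le> W \<and> \<bar>real_of_int n\<bar> \<le> W \<and>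
                  d dvd (A * m^2 - 2 * B * m * n + C * n^2)})
         \<le> K * (W^2 / sqrt (real_of_int d) + W))"
proof (intro exI[of _ 5] conjI allI impI)
  fix b A B C d :: int and W :: real
  let ?S = "{(m, n). \<bar>real_of_int m\<bar> \<le> W \<and> \<bar>real_of_int n\<bar> \<le> W \<and>
                  d dvd (A * m^2 - 2 * B * m * n + C * n^2)}"
  assume prim: "gcd (gcd A (2 * B)) C = 1" and disc: "(2 * B)^2 - 4 * A * C = - 8 * b^2"
    and "d > 0" and "d dvd 2 * b^2" and "W \<ge> 1"
  have prim': "gcd (gcd A B) C = 1"
    using prim by (metis gcd.assoc gcd.commute gcd_mult_left_left_cancel gcd_mult_unit1
        coprime_iff_gcd_eq_1 coprime_mult_right_iff)
  have "A * C - B^2 = 2 * b^2"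
    using disc by (simp add: power2_eq_square algebra_simps)
  then have disc': "d dvd A * C - B^2" using \<open>d dvd 2 * b^2\<close> by simp
  obtain N where "N > 0" and N: "\<And>z. d dvd z^2 \<longleftrightarrow> N dvd z"
    using obtain_dvd_square_iff_dvd[OF \<open>d > 0\<close>] by blast
  define e where "e = gcd (gcd A B) N"
  have card_le: "real (card ?S) \<le> (2 * W / e + 1) * (2 * W / (N div e) + 1)"
    unfolding e_def using prim' disc' \<open>N > 0\<close> N \<open>W \<ge> 1\<close> by (intro card_form_zeros_le) auto
  have "e > 0" and "e * (N div e) = N" using \<open>N > 0\<close> by (simp_all add: e_def)
  then have "N div e > 0" using \<open>N > 0\<close> by (metis zero_less_mult_pos)
  have "d \<le> N^2" using N[of N] \<open>N > 0\<close> by (simp add: zdvd_imp_le)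
  then have "sqrt (real_of_int d) \<le> real_of_int N"
    using \<open>N > 0\<close> by (metis abs_of_pos of_int_le_iff of_int_power of_int_0_less_iff
        real_sqrt_abs real_sqrt_le_mono)
  then have "(2 * W / e + 1) * (2 * W / (N div e) + 1) \<le> 5 * (W^2 / sqrt (real_of_int d) + W)"
    using \<open>d > 0\<close> \<open>e > 0\<close> \<open>N div e > 0\<close> \<open>e * (N div e) = N\<close> \<open>W \<ge> 1\<close>
    by (intro two_div_add_one_mult_le) (auto simp flip: of_int_mult)
  with card_le show "real (card ?S) \<le> 5 * (W^2 / sqrt (real_of_int d) + W)"
    by linarith
qed simp

end
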